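(* Let $X$ be a metrizable vector space over $K$ with metric $d_X$, and let $Y$ be a Banach space over $K$ with $d_Y$ the metric induced by its norm. Then $B_d(X,Y)$ is a Banach space with norm $\|F\|_{B_d(X,Y)}=d(F,0)$.
   Context: $K$ is $\mathbb{R}$ or $\mathbb{C}$. For maps $F_1,F_2:X\to Y$, $d(F_1,F_2)=\max\left\{\sup_{x\neq0,x\in X}\frac{\|F_1(x)-F_2(x)\|_Y}{d_X(x,0)},\ \|F_1(0)-F_2(0)\|_Y\right\}\in[0,\infty]$, and $B_d(X,Y)$ is the set of maps $F:X\to Y$ with $d(F,0)<\infty$, with pointwise vector operations. *)

theory Defs
  imports "HOL-Analysis.Analysis"
begin

text \<open>The scalar field K is represented by a type 'k (real or complex); a vector space
  over K is an additive group with a scalar action satisfying the axioms of the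
  HOL locale Vector_Spaces.vector_space.\<close>

text \<open>The metric d_X is the type's dist.\<close>
definition metrizable_tvs :: "('k::{field,topological_space} \<Rightarrow> 'a::{ab_group_add,metric_space} \<Rightarrow> 'a) \<Rightarrow> bool" where
  "metrizable_tvs sc \<longleftrightarrow> Vector_Spaces.vector_space sc
     \<and> continuous_on UNIV (\<lambda>p::'a \<times> 'a. fst p + snd p)
     \<and> continuous_on UNIV (\<lambda>p::'k \<times> 'a. sc (fst p) (snd p))"

definition banach_over :: "('k::real_normed_field \<Rightarrow> 'b::banach \<Rightarrow> 'b) \<Rightarrow> bool" where
  "banach_over sc \<longleftrightarrow> Vector_Spaces.vector_space sc
     \<and> (\<forall>c y. norm (sc c y) = norm c * norm y)
     \<and> (\<forall>r y. sc (of_real r) y = scaleR r y)"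

definition dB :: "('a::{zero,metric_space} \<Rightarrow> 'b::real_normed_vector) \<Rightarrow> ('a \<Rightarrow> 'b) \<Rightarrow> ennreal" where
  "dB F1 F2 = max (SUP x\<in>{x. x \<noteq> 0}. ennreal (norm (F1 x - F2 x) / dist x 0))
                  (ennreal (norm (F1 0 - F2 0)))"

definition Bd :: "('a::{zero,metric_space} \<Rightarrow> 'b::real_normed_vector) set" where
  "Bd = {F. dB F (\<lambda>_. 0) < \<infinity>}"

definition normBd :: "('a::{zero,metric_space} \<Rightarrow> 'b::real_normed_vector) \<Rightarrow> real" where
  "normBd F = enn2real (dB F (\<lambda>_. 0))"

definition banach_fun_space ::
  "('k::real_normed_field \<Rightarrow> 'b::ab_group_add \<Rightarrow> 'b) \<Rightarrow> ('a \<Rightarrow> 'b) set \<Rightarrow> (('a \<Rightarrow> 'b) \<Rightarrow> real) \<Rightarrow> bool" where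
  "banach_fun_space sc S N \<longleftrightarrow>
     (\<lambda>_. 0) \<in> S
   \<and> (\<forall>F\<in>S. \<forall>G\<in>S. (\<lambda>x. F x + G x) \<in> S)
   \<and> (\<forall>c. \<forall>F\<in>S. (\<lambda>x. sc c (F x)) \<in> S)
   \<and> (\<forall>F\<in>S. 0 \<le> N F \<and> (N F = 0 \<longleftrightarrow> F = (\<lambda>_. 0)))
   \<and> (\<forall>F\<in>S. \<forall>G\<in>S. N (\<lambda>x. F x + G x) \<le> N F + N G)
   \<and> (\<forall>c. \<forall>F\<in>S. N (\<lambda>x. sc c (F x)) = norm c * N F)
   \<and> (\<forall>f :: nat \<Rightarrow> 'a \<Rightarrow> 'b. (\<forall>n. f n \<in> S) \<and>
          (\<forall>e>0. \<exists>M. \<forall>m\<ge>M. \<forall>n\<ge>M. N (\<lambda>x. f m x - f n x) < e)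
        \<longrightarrow> (\<exists>F\<in>S. (\<lambda>n. N (\<lambda>x. f n x - F x)) \<longlonglongrightarrow> 0))"

end

theory Submission
  imports Defs
begin

text \<open>With the weight w(x) = 1/d(x,0) for x \<noteq> 0 and w(0) = 1, d(F,0) is the supremum of
  w(x) \<parallel>F x\<parallel>, so B_d(X,Y) is a weighted sup-norm space of Y-valued functions. The norm
  axioms hold pointwise, and completeness follows as for bounded functions: a Cauchy
  sequence is pointwise Cauchy in the Banach space Y, and the Cauchy estimate passes to
  the pointwise limit.\<close>

definition dB_weight :: "'a::{zero,metric_space} \<Rightarrow> real" where
  "dB_weight x = (if x = 0 then 1 else 1 / dist x 0)"

lemma dB_weight_pos: "dB_weight x > 0"
  by (simp add: dB_weight_def)

lemma dB_eq_SUP_dB_weight: "dB F G = (SUP x. ennreal (dB_weight x * norm (F x - G x)))"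
proof -
  have U: "(UNIV :: 'a set) = insert 0 {x. x \<noteq> 0}" by auto
  have "(SUP x. ennreal (dB_weight x * norm (F x - G x))) =
        sup (ennreal (norm (F 0 - G 0)))
            (SUP x\<in>{x. x \<noteq> 0}. ennreal (dB_weight x * norm (F x - G x)))"
    by (subst U, subst SUP_insert) (simp add: dB_weight_def)
  also have "(SUP x\<in>{x. x \<noteq> 0}. ennreal (dB_weight x * norm (F x - G x)))
      = (SUP x\<in>{x. x \<noteq> 0}. ennreal (norm (F x - G x) / dist x 0))"
    by (rule SUP_cong) (auto simp: dB_weight_def)
  finally show ?thesis unfolding dB_def by (simp add: sup_max max.commute)
qed

lemma dB_weight_norm_le_normBd:
  assumes "F \<in> Bd"
  shows "dB_weight x * norm (F x) \<le> normBd F"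
proof -
  let ?S = "SUP x. ennreal (dB_weight x * norm (F x))"
  have fin: "?S < \<infinity>"
    using assms unfolding Bd_def by (simp add: dB_eq_SUP_dB_weight)
  have "ennreal (dB_weight x * norm (F x)) \<le> ?S"
    by (rule SUP_upper) auto
  then have "enn2real (ennreal (dB_weight x * norm (F x))) \<le> enn2real ?S"
    using fin by (intro enn2real_mono) auto
  then show ?thesis
    using dB_weight_pos[of x] unfolding normBd_def by (simp add: dB_eq_SUP_dB_weight)
qed

lemma Bd_normBd_leI:
  assumes "\<And>x. dB_weight x * norm (F x) \<le> B"
  shows "F \<in> Bd \<and> normBd F \<le> B"
proof -
  let ?S = "SUP x. ennreal (dB_weight x * norm (F x))"
  have B_nonneg: "0 \<le> B"
    using assms[of 0] dB_weight_pos[of 0]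
    by (meson mult_nonneg_nonneg norm_ge_zero order.trans less_imp_le)
  have le: "?S \<le> ennreal B"
    by (rule SUP_least) (use assms in \<open>auto intro: ennreal_leI\<close>)
  then have fin: "?S < \<infinity>"
    using le_less_trans by fastforce
  have "enn2real ?S \<le> enn2real (ennreal B)"
    using le by (intro enn2real_mono) auto
  then show ?thesis
    using fin B_nonneg unfolding normBd_def Bd_def by (simp add: dB_eq_SUP_dB_weight)
qed

lemma normBd_nonneg: "F \<in> Bd \<Longrightarrow> 0 \<le> normBd F"
  using dB_weight_norm_le_normBd[of F 0] dB_weight_pos[of 0]
  by (meson mult_nonneg_nonneg norm_ge_zero order.trans less_imp_le)

lemma zero_in_Bd_normBd_zero:
  "(\<lambda>_. 0) \<in> (Bd :: ('a::{zero,metric_space} \<Rightarrow> 'b::real_normed_vector) set)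
   \<and> normBd (\<lambda>_::'a. 0::'b) = 0"
  using Bd_normBd_leI[of "\<lambda>_::'a. 0::'b" 0] normBd_nonneg[of "\<lambda>_::'a. 0::'b"] by simp

lemma normBd_eq_0_iff:
  assumes "F \<in> Bd"
  shows "normBd F = 0 \<longleftrightarrow> F = (\<lambda>_. 0)"
proof
  assume "normBd F = 0"
  then have "dB_weight x * norm (F x) \<le> 0" for x
    using dB_weight_norm_le_normBd[OF assms, of x] by simp
  then have "F x = 0" for x
    using dB_weight_pos[of x] by (metis mult_pos_pos zero_less_norm_iff not_le)
  then show "F = (\<lambda>_. 0)" by blast
next
  assume "F = (\<lambda>_. 0)"
  then show "normBd F = 0" using zero_in_Bd_normBd_zero by blast
qed

lemma Bd_add_normBd_triangle:
  assumes "F \<in> Bd" "G \<in> Bd"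
  shows "(\<lambda>x. F x + G x) \<in> Bd \<and> normBd (\<lambda>x. F x + G x) \<le> normBd F + normBd G"
proof (rule Bd_normBd_leI)
  fix x
  have "dB_weight x * norm (F x + G x) \<le> dB_weight x * norm (F x) + dB_weight x * norm (G x)"
    using dB_weight_pos[of x] norm_triangle_ineq[of "F x" "G x"]
    by (simp add: distrib_left[symmetric])
  also have "\<dots> \<le> normBd F + normBd G"
    using assms by (intro add_mono dB_weight_norm_le_normBd)
  finally show "dB_weight x * norm (F x + G x) \<le> normBd F + normBd G" .
qed

lemma Bd_diff:
  assumes "F \<in> Bd" "G \<in> Bd"
  shows "(\<lambda>x. F x - G x) \<in> Bd"
proof -
  have "(\<lambda>x. F x - G x) \<in> Bd \<and> normBd (\<lambda>x. F x - G x) \<le> normBd F + normBd G"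
  proof (rule Bd_normBd_leI)
    fix x
    have "dB_weight x * norm (F x - G x) \<le> dB_weight x * norm (F x) + dB_weight x * norm (G x)"
      using dB_weight_pos[of x] norm_triangle_ineq4[of "F x" "G x"]
      by (simp add: distrib_left[symmetric])
    also have "\<dots> \<le> normBd F + normBd G"
      using assms by (intro add_mono dB_weight_norm_le_normBd)
    finally show "dB_weight x * norm (F x - G x) \<le> normBd F + normBd G" .
  qed
  then show ?thesis by simp
qed

lemma Bd_scale_normBd_scale:
  fixes sc :: "'k::real_normed_field \<Rightarrow> 'b::real_normed_vector \<Rightarrow> 'b"
    and F :: "'a::{zero,metric_space} \<Rightarrow> 'b"
  assumes norm_sc: "\<And>c y. norm (sc c y) = norm c * norm y"
    and F: "F \<in> Bd"
  shows "(\<lambda>x. sc c (F x)) \<in> Bd \<and> normBd (\<lambda>x. sc c (F x)) = norm c * normBd F"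
proof -
  have weighted: "dB_weight x * norm (sc c (F x)) = norm c * (dB_weight x * norm (F x))" for x
    using norm_sc by simp
  have le: "(\<lambda>x. sc c (F x)) \<in> Bd \<and> normBd (\<lambda>x. sc c (F x)) \<le> norm c * normBd F"
    by (rule Bd_normBd_leI)
      (use dB_weight_norm_le_normBd[OF F] in \<open>auto simp: weighted intro: mult_left_mono\<close>)
  show ?thesis
  proof (cases "c = 0")
    case True
    then show ?thesis using le normBd_nonneg[of "\<lambda>x. sc c (F x)"] by simp
  next
    case False
    then have nc: "norm c > 0" by simp
    have "F \<in> Bd \<and> normBd F \<le> normBd (\<lambda>x. sc c (F x)) / norm c"
    proof (rule Bd_normBd_leI)
      fix x
      show "dB_weight x * norm (F x) \<le> normBd (\<lambda>x. sc c (F x)) / norm c"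
        using dB_weight_norm_le_normBd[OF le[THEN conjunct1], of x] nc
        by (simp add: weighted field_simps)
    qed
    then have "norm c * normBd F \<le> normBd (\<lambda>x. sc c (F x))"
      using nc by (simp add: field_simps)
    then show ?thesis using le by simp
  qed
qed

lemma Bd_Cauchy_imp_pointwise_Cauchy:
  assumes f: "\<And>n. f n \<in> Bd"
    and cauchy: "\<forall>e>0. \<exists>M. \<forall>m\<ge>M. \<forall>n\<ge>M. normBd (\<lambda>x. f m x - f n x) < e"
  shows "Cauchy (\<lambda>n. f n x)"
proof (rule metric_CauchyI)
  fix e :: real assume e: "e > 0"
  obtain M where M: "\<forall>m\<ge>M. \<forall>n\<ge>M. normBd (\<lambda>x. f m x - f n x) < dB_weight x * e"
    using cauchy dB_weight_pos[of x] e by (meson mult_pos_pos)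
  show "\<exists>M. \<forall>m\<ge>M. \<forall>n\<ge>M. dist (f m x) (f n x) < e"
  proof (intro exI allI impI)
    fix m n assume "m \<ge> M" "n \<ge> M"
    then have "dB_weight x * norm (f m x - f n x) < dB_weight x * e"
      using M dB_weight_norm_le_normBd[OF Bd_diff[OF f[of m] f[of n]], of x] by fastforce
    then show "dist (f m x) (f n x) < e"
      using dB_weight_pos[of x] by (simp add: dist_norm)
  qed
qed

lemma Bd_normBd_diff_pointwise_limit_le:
  assumes f: "\<And>n. f n \<in> Bd"
    and lim: "\<And>x. (\<lambda>n. f n x) \<longlonglongrightarrow> F x"
    and M: "\<forall>m\<ge>M. \<forall>n\<ge>M. normBd (\<lambda>x. f m x - f n x) < e"
    and n: "n \<ge> M"
  shows "(\<lambda>x. f n x - F x) \<in> Bd \<and> normBd (\<lambda>x. f n x - F x) \<le> e"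
proof (rule Bd_normBd_leI)
  fix x
  have "(\<lambda>m. dB_weight x * norm (f n x - f m x)) \<longlonglongrightarrow> dB_weight x * norm (f n x - F x)"
    by (intro tendsto_intros lim)
  moreover have "\<forall>\<^sub>F m in sequentially. dB_weight x * norm (f n x - f m x) \<le> e"
    using eventually_ge_at_top[of M]
  proof eventually_elim
    case (elim m)
    then show ?case
      using M n dB_weight_norm_le_normBd[OF Bd_diff[OF f[of n] f[of m]], of x] by fastforce
  qed
  ultimately show "dB_weight x * norm (f n x - F x) \<le> e"
    by (rule tendsto_upperbound) simp
qed

lemma Bd_complete:
  fixes f :: "nat \<Rightarrow> 'a::{zero,metric_space} \<Rightarrow> 'b::banach"
  assumes f: "\<And>n. f n \<in> Bd"
    and cauchy: "\<forall>e>0. \<exists>M. \<forall>m\<ge>M. \<forall>n\<ge>M. normBd (\<lambda>x. f m x - f n x) < e"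
  shows "\<exists>F\<in>Bd. (\<lambda>n. normBd (\<lambda>x. f n x - F x)) \<longlonglongrightarrow> 0"
proof -
  define F where "F x = lim (\<lambda>n. f n x)" for x
  have lim: "(\<lambda>n. f n x) \<longlonglongrightarrow> F x" for x
    using Bd_Cauchy_imp_pointwise_Cauchy[OF f cauchy, of x]
    unfolding F_def by (simp add: Cauchy_convergent_iff convergent_LIMSEQ_iff)
  have tail: "\<exists>M. \<forall>n\<ge>M. (\<lambda>x. f n x - F x) \<in> Bd \<and> normBd (\<lambda>x. f n x - F x) \<le> e"
    if "e > 0" for e
    using cauchy that Bd_normBd_diff_pointwise_limit_le[OF f lim] by meson
  obtain M where M: "(\<lambda>x. f M x - F x) \<in> Bd"
    using tail[of 1] by auto
  have "F = (\<lambda>x. f M x - (f M x - F x))" by simp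
  then have "F \<in> Bd" using Bd_diff[OF f M] by metis
  moreover have "(\<lambda>n. normBd (\<lambda>x. f n x - F x)) \<longlonglongrightarrow> 0"
  proof (rule LIMSEQ_I)
    fix r :: real assume r: "r > 0"
    obtain M where M: "\<forall>n\<ge>M. (\<lambda>x. f n x - F x) \<in> Bd \<and> normBd (\<lambda>x. f n x - F x) \<le> r / 2"
      using tail[of "r/2"] r by auto
    then show "\<exists>M. \<forall>n\<ge>M. norm (normBd (\<lambda>x. f n x - F x) - 0) < r"
      using normBd_nonneg r by fastforce
  qed
  ultimately show ?thesis by blast
qed

lemma banach_fun_space_Bd:
  fixes sc :: "'k::real_normed_field \<Rightarrow> 'b::banach \<Rightarrow> 'b"
  assumes norm_sc: "\<And>c y. norm (sc c y) = norm c * norm y"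
  shows "banach_fun_space sc (Bd :: ('a::{zero,metric_space} \<Rightarrow> 'b) set) normBd"
  unfolding banach_fun_space_def
proof (intro conjI ballI allI impI)
  fix c and F G :: "'a \<Rightarrow> 'b"
  assume "F \<in> Bd" "G \<in> Bd"
  then show "(\<lambda>x. F x + G x) \<in> Bd" "normBd (\<lambda>x. F x + G x) \<le> normBd F + normBd G"
    "(\<lambda>x. sc c (F x)) \<in> Bd" "normBd (\<lambda>x. sc c (F x)) = norm c * normBd F"
    "0 \<le> normBd F" "normBd F = 0 \<longleftrightarrow> F = (\<lambda>_. 0)"
    using Bd_add_normBd_triangle Bd_scale_normBd_scale[OF norm_sc] normBd_nonneg normBd_eq_0_iff
    by blast+
next
  fix f :: "nat \<Rightarrow> 'a \<Rightarrow> 'b"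
  assume "(\<forall>n. f n \<in> Bd) \<and> (\<forall>e>0. \<exists>M. \<forall>m\<ge>M. \<forall>n\<ge>M. normBd (\<lambda>x. f m x - f n x) < e)"
  then show "\<exists>F\<in>Bd. (\<lambda>n. normBd (\<lambda>x. f n x - F x)) \<longlonglongrightarrow> 0"
    using Bd_complete by blast
qed (use zero_in_Bd_normBd_zero in blast)

theorem corollary11:
  fixes scXR :: "real \<Rightarrow> 'a::{ab_group_add,metric_space} \<Rightarrow> 'a"
    and scYR :: "real \<Rightarrow> 'b::banach \<Rightarrow> 'b"
    and scXC :: "complex \<Rightarrow> 'c::{ab_group_add,metric_space} \<Rightarrow> 'c"
    and scYC :: "complex \<Rightarrow> 'd::banach \<Rightarrow> 'd"
  shows "(metrizable_tvs scXR \<and> banach_over scYR \<longrightarrow>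
            banach_fun_space scYR (Bd :: ('a \<Rightarrow> 'b) set) normBd)
       \<and> (metrizable_tvs scXC \<and> banach_over scYC \<longrightarrow>
            banach_fun_space scYC (Bd :: ('c \<Rightarrow> 'd) set) normBd)"
  by (intro conjI impI banach_fun_space_Bd) (auto simp: banach_over_def)

end
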